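(* Let $C$ be a finite set of candidates, $>$ a tie-breaking order on $C$, and $V$ a preference profile. Every GS-game for $V$ under 3-Approval that satisfies the Minimality Assumption has a Nash equilibrium in pure strategies.
   Context: Each voter $i$ has a strict linear order $v_i$ over $C$; $x\succ_i y$ means $i$ ranks $x$ above $y$; $\mathrm{top}_k(v)$ is the set of the $k$ highest-ranked candidates of $v$. $k$-Approval: each candidate gets one point from each voter ranking her among his top $k$; the highest score wins, ties broken in favour of the candidate highest in the fixed strict linear order $>$. Write $\mathcal{R}$ for the rule and $(V_{-i},v_i')$ for $V$ with $v_i$ replaced by $v_i'$. A GS-manipulation of voter $i$ at $V$ is a vote $v_i'$ such that $i$ strictly prefers $\mathcal{R}(V_{-i},v_i')$ to $\mathcal{R}(V)$ and for every vote $v_i''$ either $\mathcal{R}(V_{-i},v_i'')=\mathcal{R}(V_{-i},v_i')$ or $i$ strictly prefers $\mathcal{R}(V_{-i},v_i')$ to $\mathcal{R}(V_{-i},v_i'')$; it is in favour of $x=\mathcal{R}(V_{-i},v_i')$; $i$ is a GS-manipulator if he has one. GS-game for $V$: players are all GS-manipulators at $V$; player $i$'s action set $A_i$ consists of $v_i$ and a (possibly empty) subset of his GS-manipulations; non-players vote sincerely; players compare action profiles via their preferences over the resulting winners. Pure Nash equilibrium: no player can obtain a strictly preferred winner by switching to another action of his own action set. Let $w=\mathcal{R}(V)$. A GS-manipulation $v_i'$ in favour of $x$ is of Type 1 if $w,x\notin\mathrm{top}_k(v_i)$, and of Type 2 if $w,x\in\mathrm{top}_k(v_i)$. A Type 1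 GS-manipulation in favour of $x$ is minimal if $\mathrm{top}_k(v_i')$ is obtained from $\mathrm{top}_k(v_i)$ by removing the candidate in $k$-th position of $v_i$ and adding $x$ (which is placed in $k$-th position). A Type 2 GS-manipulation $v_i'$ is minimal if the number $\ell=|\mathrm{top}_k(v_i)\setminus\mathrm{top}_k(v_i')|$ of candidates moved out of the top $k$ is the smallest possible among GS-manipulations of $i$, and $\mathrm{top}_k(v_i')\setminus\mathrm{top}_k(v_i)$ consists of the $\ell$ candidates ranked highest by $v_i$ among those not in $\mathrm{top}_k(v_i)$. Minimality Assumption: for every player $j$, all GS-manipulations in $A_j$ are minimal. *)

theory Defs
  imports Main
begin

text \<open>A vote (strict linear
order over C) is represented as a list without repetitions whose set is C,
the first entry being the most preferred candidate.\<close>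

definition is_vote :: "'c set \<Rightarrow> 'c list \<Rightarrow> bool" where
  "is_vote C v \<longleftrightarrow> distinct v \<and> set v = C"

definition prefers :: "'c list \<Rightarrow> 'c \<Rightarrow> 'c \<Rightarrow> bool" where
  "prefers v x y \<longleftrightarrow> (\<exists>i j. i < j \<and> j < length v \<and> v ! i = x \<and> v ! j = y)"

definition top :: "nat \<Rightarrow> 'c list \<Rightarrow> 'c set" where
  "top k v = set (take k v)"

definition score :: "nat \<Rightarrow> 'v set \<Rightarrow> ('v \<Rightarrow> 'c list) \<Rightarrow> 'c \<Rightarrow> nat" where
  "score k N V x = card {i \<in> N. x \<in> top k (V i)}"

text \<open>k-Approval winner; the tie-breaking order is the list tb (earlier = higher),
and set tb = C.\<close>
definition kapp :: "nat \<Rightarrow> 'c list \<Rightarrow> 'v set \<Rightarrow> ('v \<Rightarrow> 'c list) \<Rightarrow> 'c" where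
  "kapp k tb N V =
     hd (filter (\<lambda>x. score k N V x = Max (score k N V ` set tb)) tb)"

definition gs_manipulation ::
  "nat \<Rightarrow> 'c list \<Rightarrow> 'v set \<Rightarrow> ('v \<Rightarrow> 'c list) \<Rightarrow> 'v \<Rightarrow> 'c list \<Rightarrow> bool" where
  "gs_manipulation k tb N V i v' \<longleftrightarrow>
     i \<in> N \<and> is_vote (set tb) v' \<and>
     prefers (V i) (kapp k tb N (V(i := v'))) (kapp k tb N V) \<and>
     (\<forall>v''. is_vote (set tb) v'' \<longrightarrow>
        kapp k tb N (V(i := v'')) = kapp k tb N (V(i := v')) \<or>
        prefers (V i) (kapp k tb N (V(i := v'))) (kapp k tb N (V(i := v''))))"

definition gs_manipulator ::
  "nat \<Rightarrow> 'c list \<Rightarrow> 'v set \<Rightarrow> ('v \<Rightarrow> 'c list) \<Rightarrow> 'v \<Rightarrow> bool" where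
  "gs_manipulator k tb N V i \<longleftrightarrow> (\<exists>v'. gs_manipulation k tb N V i v')"

definition players :: "nat \<Rightarrow> 'c list \<Rightarrow> 'v set \<Rightarrow> ('v \<Rightarrow> 'c list) \<Rightarrow> 'v set" where
  "players k tb N V = {i \<in> N. gs_manipulator k tb N V i}"

definition gs_game ::
  "nat \<Rightarrow> 'c list \<Rightarrow> 'v set \<Rightarrow> ('v \<Rightarrow> 'c list) \<Rightarrow> ('v \<Rightarrow> 'c list set) \<Rightarrow> bool" where
  "gs_game k tb N V A \<longleftrightarrow>
     (\<forall>i \<in> players k tb N V.
        V i \<in> A i \<and> A i \<subseteq> insert (V i) {v'. gs_manipulation k tb N V i v'})"

definition action_profile ::
  "nat \<Rightarrow> 'c list \<Rightarrow> 'v set \<Rightarrow> ('v \<Rightarrow> 'c list) \<Rightarrow> ('v \<Rightarrow> 'c list set)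
     \<Rightarrow> ('v \<Rightarrow> 'c list) \<Rightarrow> bool" where
  "action_profile k tb N V A s \<longleftrightarrow>
     (\<forall>i \<in> players k tb N V. s i \<in> A i) \<and>
     (\<forall>i. i \<notin> players k tb N V \<longrightarrow> s i = V i)"

definition pure_nash ::
  "nat \<Rightarrow> 'c list \<Rightarrow> 'v set \<Rightarrow> ('v \<Rightarrow> 'c list) \<Rightarrow> ('v \<Rightarrow> 'c list set)
     \<Rightarrow> ('v \<Rightarrow> 'c list) \<Rightarrow> bool" where
  "pure_nash k tb N V A s \<longleftrightarrow>
     action_profile k tb N V A s \<and>
     (\<forall>i \<in> players k tb N V. \<forall>a \<in> A i.
        \<not> prefers (V i) (kapp k tb N (s(i := a))) (kapp k tb N s))"

definition minimal_type1 ::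
  "nat \<Rightarrow> 'c list \<Rightarrow> 'v set \<Rightarrow> ('v \<Rightarrow> 'c list) \<Rightarrow> 'v \<Rightarrow> 'c list \<Rightarrow> bool" where
  "minimal_type1 k tb N V i v' \<longleftrightarrow>
     (let w = kapp k tb N V; x = kapp k tb N (V(i := v')) in
      gs_manipulation k tb N V i v' \<and>
      w \<notin> top k (V i) \<and> x \<notin> top k (V i) \<and>
      top k v' = insert x (top k (V i) - {V i ! (k - 1)}) \<and>
      v' ! (k - 1) = x)"

definition minimal_type2 ::
  "nat \<Rightarrow> 'c list \<Rightarrow> 'v set \<Rightarrow> ('v \<Rightarrow> 'c list) \<Rightarrow> 'v \<Rightarrow> 'c list \<Rightarrow> bool" where
  "minimal_type2 k tb N V i v' \<longleftrightarrow>
     (let w = kapp k tb N V; x = kapp k tb N (V(i := v'));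
          l = card (top k (V i) - top k v') in
      gs_manipulation k tb N V i v' \<and>
      w \<in> top k (V i) \<and> x \<in> top k (V i) \<and>
      (\<forall>v''. gs_manipulation k tb N V i v'' \<longrightarrow> l \<le> card (top k (V i) - top k v'')) \<and>
      top k v' - top k (V i) = set (take l (drop k (V i))))"

definition minimal_manipulation ::
  "nat \<Rightarrow> 'c list \<Rightarrow> 'v set \<Rightarrow> ('v \<Rightarrow> 'c list) \<Rightarrow> 'v \<Rightarrow> 'c list \<Rightarrow> bool" where
  "minimal_manipulation k tb N V i v' \<longleftrightarrow>
     minimal_type1 k tb N V i v' \<or> minimal_type2 k tb N V i v'"

definition minimality_assumption ::
  "nat \<Rightarrow> 'c list \<Rightarrow> 'v set \<Rightarrow> ('v \<Rightarrow> 'c list) \<Rightarrow> ('v \<Rightarrow> 'c list set) \<Rightarrow> bool" where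
  "minimality_assumption k tb N V A \<longleftrightarrow>
     (\<forall>j \<in> players k tb N V. \<forall>a \<in> A j.
        gs_manipulation k tb N V j a \<longrightarrow> minimal_manipulation k tb N V j a)"

end

theory Submission
  imports Defs
begin

text \<open>Ties are encoded in the integer score \<open>|C| * score + (|C| - tie-breaking position)\<close>, whose
unique maximiser is the 3-Approval winner, and a change of one vote moves it by multiples of \<open>|C|\<close>.
A minimal Type 1 manipulation swaps the voter's third choice for his target; a minimal Type 2
manipulation swaps the winner \<open>w\<close> out of his top three and, if two candidates have to leave,
also the runner-up. All minimal manipulations of a player have the same top three, so letting
exactly the players of a set \<open>D\<close> manipulate is a pure Nash equilibrium as soon as no player gains
by joining or leaving \<open>D\<close>. Such a stable \<open>D\<close> exists: if some player is of Type 1, the one whose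
target is strongest, alone; if all are of Type 2 and some swap only \<open>w\<close> out, a largest group of
these electing the runner-up, unless a player swapping two candidates wants to join it, and then
that player alone; otherwise any single player.\<close>

section \<open>Positions in a vote\<close>

definition position :: "'a list \<Rightarrow> 'a \<Rightarrow> nat" where
  "position v c = length (takeWhile (\<lambda>x. x \<noteq> c) v)"

lemma position_less_length: "c \<in> set v \<Longrightarrow> position v c < length v"
  unfolding position_def by (induction v) auto

lemma nth_position: "c \<in> set v \<Longrightarrow> v ! position v c = c"
  unfolding position_def by (metis (mono_tags) nth_length_takeWhile position_def
    position_less_length)

lemma position_nth: "distinct v \<Longrightarrow> i < length v \<Longrightarrow> position v (v ! i) = i"
  by (metis distinct_Ex1 nth_mem nth_position position_less_length)

lemma position_inject: "c \<in> set v \<Longrightarrow> d \<in> set v \<Longrightarrow> position v c = position v d \<Longrightarrow> c = d"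
  by (metis nth_position)

lemma prefers_iff_position:
  "distinct v \<Longrightarrow> prefers v c d \<longleftrightarrow> c \<in> set v \<and> d \<in> set v \<and> position v c < position v d"
  unfolding prefers_def
  by (metis nth_mem nth_position order.strict_trans position_less_length position_nth)

lemma prefers_irrefl: "distinct v \<Longrightarrow> \<not> prefers v c c"
  by (simp add: prefers_iff_position)

lemma prefers_asym: "distinct v \<Longrightarrow> prefers v c d \<Longrightarrow> \<not> prefers v d c"
  by (simp add: prefers_iff_position)

lemma mem_top_iff_position: "distinct v \<Longrightarrow> c \<in> top k v \<longleftrightarrow> c \<in> set v \<and> position v c < k"
  unfolding top_def
  by (metis in_set_conv_nth length_take min_less_iff_conj nth_position nth_take
      position_less_length position_nth)

lemma prefers_top:
  "distinct v \<Longrightarrow> c \<in> top k v \<Longrightarrow> d \<in> set v \<Longrightarrow> d \<notin> top k v \<Longrightarrow> prefers v c d"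
  by (auto simp: prefers_iff_position mem_top_iff_position)

lemma mem_top_if_prefers_nth:
  assumes "distinct v" "prefers v c (v ! i)" "i < length v" "i < k"
  shows "c \<in> top k v"
proof -
  obtain i' where "i' < i" "v ! i' = c"
    using assms(1-3) unfolding prefers_def by (metis nth_eq_iff_index_eq)
  then show ?thesis unfolding top_def using assms(3,4) by (metis in_set_conv_nth length_take
      min_less_iff_conj nth_take order.strict_trans)
qed

lemma top_subset_set: "top k v \<subseteq> set v"
  unfolding top_def by (rule set_take_subset)

lemma hd_filter_least_position:
  assumes "filter P xs \<noteq> []"
  shows "hd (filter P xs) \<in> set xs" "P (hd (filter P xs))"
    "\<And>d. d \<in> set xs \<Longrightarrow> P d \<Longrightarrow> position xs (hd (filter P xs)) \<le> position xs d"
  using assms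
proof (induction xs)
  case (Cons a xs)
  { case 1 with Cons.IH show ?case by auto }
  { case 2 with Cons.IH show ?case by auto }
  { case (3 d) with Cons.IH show ?case by (auto simp: position_def) }
qed simp_all

section \<open>Tie-broken scores\<close>

text \<open>As \<open>1 \<le> length tb - position tb c \<le> length tb\<close>, comparing \<open>tb_score\<close> compares scores
first and tie-breaking positions second.\<close>

definition tb_score :: "nat \<Rightarrow> 'c list \<Rightarrow> 'v set \<Rightarrow> ('v \<Rightarrow> 'c list) \<Rightarrow> 'c \<Rightarrow> int" where
  "tb_score k tb N P c = int (length tb) * int (score k N P c) + int (length tb - position tb c)"

definition approval_gain :: "nat \<Rightarrow> 'c list \<Rightarrow> 'c list \<Rightarrow> 'c \<Rightarrow> int" where
  "approval_gain k v v' c = of_bool (c \<in> top k v') - of_bool (c \<in> top k v)"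

lemma tb_score_inject:
  assumes "c \<in> set tb" "d \<in> set tb" "tb_score k tb N P c = tb_score k tb N P d"
  shows "c = d"
proof -
  let ?M = "int (length tb)" and ?s = "\<lambda>c. int (score k N P c)"
    and ?r = "\<lambda>c. int (length tb - position tb c)"
  have r: "0 < ?r c" "?r c \<le> ?M" "0 < ?r d" "?r d \<le> ?M"
    using position_less_length[OF assms(1)] position_less_length[OF assms(2)] by auto
  have eq: "?M * (?s c - ?s d) = ?r d - ?r c"
    using assms(3) unfolding tb_score_def by (simp add: algebra_simps)
  have "?s c = ?s d"
  proof (rule ccontr)
    assume "?s c \<noteq> ?s d"
    then have "1 \<le> \<bar>?s c - ?s d\<bar>" by linarith
    then have "?M * 1 \<le> ?M * \<bar>?s c - ?s d\<bar>" by (rule mult_left_mono) simp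
    with eq r show False by (simp add: abs_mult)
  qed
  with eq have "position tb c = position tb d"
    using position_less_length[OF assms(1)] position_less_length[OF assms(2)] by simp
  then show ?thesis using position_inject assms(1,2) by metis
qed

lemma
  assumes "distinct tb" "tb \<noteq> []"
  shows kapp_mem: "kapp k tb N P \<in> set tb"
    and tb_score_less_kapp:
      "d \<in> set tb \<Longrightarrow> d \<noteq> kapp k tb N P \<Longrightarrow> tb_score k tb N P d < tb_score k tb N P (kapp k tb N P)"
proof -
  let ?s = "score k N P"
  define m where "m = Max (?s ` set tb)"
  have fin: "finite (?s ` set tb)" and ne: "?s ` set tb \<noteq> {}" using assms by auto
  have le_m: "\<forall>d\<in>set tb. ?s d \<le> m" unfolding m_def using fin by auto
  have "filter (\<lambda>x. ?s x = m) tb \<noteq> []"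
    using Max_in[OF fin ne] unfolding m_def by (auto simp: filter_empty_conv)
  note e = hd_filter_least_position[OF this, folded m_def]
  have ke: "kapp k tb N P = hd (filter (\<lambda>x. ?s x = m) tb)" unfolding kapp_def m_def by simp
  show "kapp k tb N P \<in> set tb" using e(1) ke by simp
  assume d: "d \<in> set tb" "d \<noteq> kapp k tb N P"
  let ?e = "kapp k tb N P"
  have pe: "position tb ?e < length tb" using position_less_length e(1) ke by metis
  have pd: "position tb d < length tb" using position_less_length d(1) by metis
  show "tb_score k tb N P d < tb_score k tb N P ?e"
  proof (cases "?s d = m")
    case True
    then have "position tb ?e < position tb d"
      using e(1,3) ke d position_inject[of ?e tb d] by (metis le_neq_implies_less)
    then show ?thesis using True e(2) ke pd unfolding tb_score_def by simp
  next
    case False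
    then have "int (?s d) + 1 \<le> int (?s ?e)" using le_m d e(2) ke by fastforce
    then have "int (length tb) * (int (?s d) + 1) \<le> int (length tb) * int (?s ?e)"
      by (rule mult_left_mono) simp
    then show ?thesis using pe unfolding tb_score_def by (simp add: algebra_simps)
  qed
qed

lemma kapp_eqI:
  assumes "distinct tb" "tb \<noteq> []" "c \<in> set tb"
    and "\<And>d. d \<in> set tb \<Longrightarrow> d \<noteq> c \<Longrightarrow> tb_score k tb N P d < tb_score k tb N P c"
  shows "kapp k tb N P = c"
  using tb_score_less_kapp[OF assms(1,2)] kapp_mem[OF assms(1,2)] assms(3,4) by fastforce

lemma score_top_cong:
  assumes "\<forall>q\<in>N. top k (P q) = top k (Q q)"
  shows "score k N P = score k N Q"
  unfolding score_def using assms by (intro ext arg_cong[where f = card]) auto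

lemma kapp_top_cong:
  assumes "\<forall>q\<in>N. top k (P q) = top k (Q q)"
  shows "kapp k tb N P = kapp k tb N Q"
  unfolding kapp_def by (simp add: score_top_cong[OF assms])

lemma score_fun_upd:
  assumes "finite N" "q \<in> N"
  shows "int (score k N (P(q := v)) c) = int (score k N P c) + approval_gain k (P q) v c"
proof -
  let ?R = "{i \<in> N - {q}. c \<in> top k (P i)}"
  have split: "{i \<in> N. c \<in> top k (Q i)} = ?R \<union> (if c \<in> top k (Q q) then {q} else {})"
    if "\<forall>i\<in>N - {q}. Q i = P i" for Q
    using that assms(2) by (auto; metis DiffI singletonD)
  have "card {i \<in> N. c \<in> top k (Q i)} = card ?R + of_bool (c \<in> top k (Q q))"
    if "\<forall>i\<in>N - {q}. Q i = P i" for Q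
    unfolding split[OF that] using assms(1) by (simp add: card_Un_disjoint)
  from this[of P] this[of "P(q := v)"] show ?thesis
    unfolding score_def approval_gain_def by simp
qed

lemma tb_score_fun_upd:
  "finite N \<Longrightarrow> q \<in> N \<Longrightarrow>
    tb_score k tb N (P(q := v)) c = tb_score k tb N P c + int (length tb) * approval_gain k (P q)
      v c"
  unfolding tb_score_def by (simp add: score_fun_upd algebra_simps)

lemma override_on_Diff_singleton: "override_on f g (A - {x}) = (override_on f g A)(x := f x)"
  by (auto simp: override_on_def)

lemma tb_score_override_on_eq:
  "\<forall>q\<in>D. c \<in> top k (a q) \<longleftrightarrow> c \<in> top k (V q) \<Longrightarrow>
    tb_score k tb N (override_on V a D) c = tb_score k tb N V c"
  unfolding tb_score_def score_def override_on_def by (auto intro!: arg_cong[where f = card])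

lemma score_override_on_less:
  assumes "finite N" "\<forall>q'\<in>D. c \<in> top k (P q') \<longrightarrow> c \<in> top k (Q q')"
    and "q \<in> D" "q \<in> N" "c \<in> top k (Q q)" "c \<notin> top k (P q)"
  shows "score k N (override_on V P D) c < score k N (override_on V Q D) c"
proof -
  have sub: "{i \<in> N. c \<in> top k (override_on V P D i)} \<subset> {i \<in> N. c \<in> top k (override_on V Q D i)}"
    using assms(2-6) unfolding override_on_def by auto
  then show ?thesis unfolding score_def using assms(1) by (simp add: psubset_card_mono)
qed

lemma tb_score_override_on_gain:
  assumes "finite N" "\<forall>q'\<in>D. c \<in> top k (V q') \<longrightarrow> c \<in> top k (a q')"
    and "q \<in> D" "q \<in> N" "c \<in> top k (a q)" "c \<notin> top k (V q)"
  shows "tb_score k tb N V c + int (length tb) \<le> tb_score k tb N (override_on V a D) c"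
proof -
  have "override_on V V D = V" by (simp add: override_on_def)
  then have "score k N V c < score k N (override_on V a D) c"
    using score_override_on_less[of N D c k V a q V] assms by simp
  then have "int (score k N V c) + 1 \<le> int (score k N (override_on V a D) c)" by simp
  from mult_left_mono[OF this, of "int (length tb)"] show ?thesis
    unfolding tb_score_def by (simp add: algebra_simps)
qed

lemma tb_score_override_on_loss:
  assumes "finite N" "\<forall>q'\<in>D. c \<in> top k (a q') \<longrightarrow> c \<in> top k (V q')"
    and "q \<in> D" "q \<in> N" "c \<notin> top k (a q)" "c \<in> top k (V q)"
  shows "tb_score k tb N (override_on V a D) c \<le> tb_score k tb N V c - int (length tb)"
proof -
  have "override_on V V D = V" by (simp add: override_on_def)
  then have "score k N (override_on V a D) c < score k N V c"
    using score_override_on_less[of N D c k a V q V] assms by simp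
  then have "int (score k N (override_on V a D) c) + 1 \<le> int (score k N V c)" by simp
  from mult_left_mono[OF this, of "int (length tb)"] show ?thesis
    unfolding tb_score_def by (simp add: algebra_simps)
qed

section \<open>Minimal manipulations under 3-Approval\<close>

locale approval3_profile =
  fixes tb :: "'c list" and N :: "'v set" and V :: "'v \<Rightarrow> 'c list"
  assumes distinct_tb: "distinct tb" and tb_nonempty: "tb \<noteq> []" and finite_N: "finite N"
    and votes: "\<forall>i\<in>N. is_vote (set tb) (V i)"
begin

abbreviation "M \<equiv> int (length tb)"
abbreviation "S \<equiv> tb_score 3 tb N"
abbreviation "win \<equiv> kapp 3 tb N"
abbreviation "w \<equiv> win V"
abbreviation "gain i b \<equiv> approval_gain 3 (V i) b"

lemma M_pos: "0 < M"
  using tb_nonempty by simp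

lemma M_mult_mono: "u \<le> v \<Longrightarrow> M * u \<le> M * v"
  using M_pos by simp

lemma win_mem: "win P \<in> set tb"
  by (rule kapp_mem[OF distinct_tb tb_nonempty])

lemma S_less_win: "d \<in> set tb \<Longrightarrow> d \<noteq> win P \<Longrightarrow> S P d < S P (win P)"
  by (rule tb_score_less_kapp[OF distinct_tb tb_nonempty])

lemma win_eqI: "c \<in> set tb \<Longrightarrow> (\<And>d. d \<in> set tb \<Longrightarrow> d \<noteq> c \<Longrightarrow> S P d < S P c) \<Longrightarrow> win P = c"
  by (rule kapp_eqI[OF distinct_tb tb_nonempty])

lemma S_fun_upd: "i \<in> N \<Longrightarrow> S (P(i := b)) c = S P c + M * approval_gain 3 (P i) b c"
  by (rule tb_score_fun_upd[OF finite_N])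

lemma S_less_win_fun_upd:
  "i \<in> N \<Longrightarrow> c \<in> set tb \<Longrightarrow> c \<noteq> win (V(i := b)) \<Longrightarrow>
    S V c + M * gain i b c < S V (win (V(i := b))) + M * gain i b (win (V(i := b)))"
  using S_less_win[of c "V(i := b)"] by (simp add: S_fun_upd)

lemma win_fun_upd_eqI:
  assumes "i \<in> N" "x \<in> set tb"
    and "\<And>c. c \<in> set tb \<Longrightarrow> c \<noteq> x \<Longrightarrow> S V c + M * gain i b c < S V x + M * gain i b x"
  shows "win (V(i := b)) = x"
  using assms by (intro win_eqI) (simp_all add: S_fun_upd)

lemma vote_length: "is_vote (set tb) v \<Longrightarrow> length v = length tb"
  unfolding is_vote_def using distinct_card[OF distinct_tb] by (metis distinct_card)

lemma vote_top_subset: "is_vote (set tb) v \<Longrightarrow> top 3 v \<subseteq> set tb"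
  unfolding is_vote_def using top_subset_set by metis

lemma vote_top_card: "is_vote (set tb) v \<Longrightarrow> card (top 3 v) = min 3 (length tb)"
  unfolding top_def using vote_length[of v] unfolding is_vote_def by (simp add: distinct_card)

lemma vote_top_eq_set: "is_vote (set tb) v \<Longrightarrow> length tb \<le> 3 \<Longrightarrow> top 3 v = set tb"
  unfolding top_def using vote_length[of v] unfolding is_vote_def by simp

lemma voter_vote: "i \<in> N \<Longrightarrow> is_vote (set tb) (V i)"
  using votes by blast

lemma distinct_vote: "i \<in> N \<Longrightarrow> distinct (V i)"
  using voter_vote unfolding is_vote_def by blast

lemma set_vote: "i \<in> N \<Longrightarrow> set (V i) = set tb"
  using voter_vote unfolding is_vote_def by blast

lemma vote_with_top3:
  assumes "x \<in> set tb" "t \<in> set tb" "y \<in> set tb" "distinct [x, t, y]"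
  obtains b where "is_vote (set tb) b" "top 3 b = {x, t, y}"
proof
  let ?b = "[x, t, y] @ filter (\<lambda>c. c \<notin> {x, t, y}) tb"
  show "is_vote (set tb) ?b" unfolding is_vote_def using distinct_tb assms by auto
  show "top 3 ?b = {x, t, y}" unfolding top_def by auto
qed

lemma gs_manipulationD:
  assumes "gs_manipulation 3 tb N V i a"
  shows "i \<in> N" "is_vote (set tb) a" "prefers (V i) (win (V(i := a))) w" "win (V(i := a)) \<noteq> w"
    "\<And>b. is_vote (set tb) b \<Longrightarrow>
      win (V(i := b)) = win (V(i := a)) \<or> prefers (V i) (win (V(i := a))) (win (V(i := b)))"
  using assms prefers_irrefl[OF distinct_vote] unfolding gs_manipulation_def by metis+

lemma gs_manipulation_same_winner:
  assumes "gs_manipulation 3 tb N V i a" "gs_manipulation 3 tb N V i b"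
  shows "win (V(i := a)) = win (V(i := b))"
  using gs_manipulationD(5)[OF assms(1) gs_manipulationD(2)[OF assms(2)]]
    gs_manipulationD(5)[OF assms(2) gs_manipulationD(2)[OF assms(1)]]
    prefers_asym[OF distinct_vote[OF gs_manipulationD(1)[OF assms(1)]]] by metis

lemma gs_manipulation_if_same_winner:
  "gs_manipulation 3 tb N V i a \<Longrightarrow> is_vote (set tb) b \<Longrightarrow> win (V(i := b)) = win (V(i := a)) \<Longrightarrow>
    gs_manipulation 3 tb N V i b"
  unfolding gs_manipulation_def by auto

text \<open>Votes are 0-indexed lists: \<open>V i ! 2\<close> is the third and \<open>V i ! 3\<close> the fourth choice of \<open>i\<close>.\<close>

lemma minimal_type1_shape:
  assumes "minimal_type1 3 tb N V i a"
  defines "x \<equiv> win (V(i := a))" and "d \<equiv> V i ! 2"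
  shows "gs_manipulation 3 tb N V i a" "i \<in> N" "w \<notin> top 3 (V i)" "x \<notin> top 3 (V i)"
    "d \<in> top 3 (V i)" "d \<in> set tb" "d \<noteq> x" "d \<noteq> w"
    "top 3 a = insert x (top 3 (V i) - {d})"
    "gain i a c = of_bool (c = x) - of_bool (c = d)"
    "c \<in> set tb \<Longrightarrow> c \<noteq> x \<Longrightarrow> S V c - M * of_bool (c = d) < S V x + M"
    "3 < length tb"
proof -
  show gs: "gs_manipulation 3 tb N V i a" and wT: "w \<notin> top 3 (V i)" and xT: "x \<notin> top 3 (V i)"
    and Ta: "top 3 a = insert x (top 3 (V i) - {d})"
    using assms unfolding minimal_type1_def Let_def by auto
  show i: "i \<in> N" using gs_manipulationD(1)[OF gs] .
  show "3 < length tb"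
  proof (rule ccontr)
    assume "\<not> 3 < length tb"
    then have "top 3 (V i) = set tb" using vote_top_eq_set[OF voter_vote[OF i]] by simp
    then show False using wT win_mem by blast
  qed
  then have "2 < length (take 3 (V i))" using vote_length[OF voter_vote[OF i]] by simp
  moreover have "take 3 (V i) ! 2 = d" unfolding d_def by simp
  ultimately show dT: "d \<in> top 3 (V i)" unfolding top_def by (metis nth_mem)
  then show "d \<in> set tb" using top_subset_set[of 3 "V i"] set_vote[OF i] by blast
  show dx: "d \<noteq> x" "d \<noteq> w" using dT xT wT by auto
  show gain: "gain i a c = of_bool (c = x) - of_bool (c = d)" for c
    unfolding approval_gain_def using Ta xT dT by (cases "c = x"; cases "c = d") auto
  assume c: "c \<in> set tb" "c \<noteq> x"
  have "S V c + M * gain i a c < S V x + M * gain i a x"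
    using S_less_win_fun_upd[OF i c(1)] c(2) unfolding x_def by blast
  then show "S V c - M * of_bool (c = d) < S V x + M"
    using gain[of c] gain[of x] dx c(2) by simp
qed

lemma minimal_type2_le_card:
  "minimal_type2 3 tb N V i a \<Longrightarrow> gs_manipulation 3 tb N V i b \<Longrightarrow>
    card (top 3 (V i) - top 3 a) \<le> card (top 3 (V i) - top 3 b)"
  unfolding minimal_type2_def Let_def by auto

lemma minimal_type2_basic:
  assumes "minimal_type2 3 tb N V i a"
  defines "x \<equiv> win (V(i := a))"
  shows "gs_manipulation 3 tb N V i a" "i \<in> N" "w \<in> top 3 (V i)" "x \<in> top 3 (V i)"
    "w \<notin> top 3 a" "x \<in> top 3 a" "3 < length tb"
    "top 3 a - top 3 (V i) = set (take (card (top 3 (V i) - top 3 a)) (drop 3 (V i)))"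
proof -
  let ?T = "top 3 (V i)" and ?Ta = "top 3 a"
  show gs: "gs_manipulation 3 tb N V i a" and wT: "w \<in> ?T" and xT: "x \<in> ?T"
    and "?Ta - ?T = set (take (card (?T - ?Ta)) (drop 3 (V i)))"
    using assms unfolding minimal_type2_def Let_def by auto
  show i: "i \<in> N" using gs_manipulationD(1)[OF gs] .
  have xw: "x \<noteq> w" using gs_manipulationD(4)[OF gs] unfolding x_def .
  have gain: "gain i a c = of_bool (c \<in> ?Ta) - of_bool (c \<in> ?T)" for c
    unfolding approval_gain_def ..
  have x_beats_w: "S V w + M * gain i a w < S V x + M * gain i a x"
    using S_less_win_fun_upd[OF i win_mem[of V], where b = a] xw unfolding x_def by metis
  have w_beats_x: "S V x < S V w" using S_less_win[OF win_mem[of "V(i := a)", folded x_def] xw] .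
  show wTa: "w \<notin> ?Ta"
    using x_beats_w w_beats_x M_pos wT xT unfolding gain by (cases "x \<in> ?Ta") auto
  show "x \<in> ?Ta"
    using x_beats_w w_beats_x wT xT wTa unfolding gain by (cases "x \<in> ?Ta") auto
  show "3 < length tb"
  proof (rule ccontr)
    assume "\<not> 3 < length tb"
    then have "?Ta = set tb" using vote_top_eq_set[OF gs_manipulationD(2)[OF gs]] by simp
    then show False using wTa win_mem by blast
  qed
qed

lemma minimal_type2_one_swap:
  assumes "minimal_type2 3 tb N V i a" "card (top 3 (V i) - top 3 a) = 1"
  defines "x \<equiv> win (V(i := a))" and "y \<equiv> V i ! 3"
  shows "top 3 a = insert y (top 3 (V i) - {w})" "y \<in> set tb" "y \<notin> top 3 (V i)"
    "gain i a c = of_bool (c = y) - of_bool (c = w)"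
    "S V y + M < S V x" "S V w - M < S V x"
    "c \<in> set tb \<Longrightarrow> c \<noteq> w \<Longrightarrow> c \<noteq> x \<Longrightarrow> S V c < S V x"
proof -
  let ?T = "top 3 (V i)" and ?Ta = "top 3 a"
  note basic = minimal_type2_basic[OF assms(1), folded x_def]
  have i: "i \<in> N" and xw: "x \<noteq> w"
    using basic(1,2) gs_manipulationD(4)[OF basic(1)] unfolding x_def by auto
  have "?T - ?Ta = {w}"
    using assms(2) basic(3,5) by (metis DiffI card_1_singletonE singletonD)
  moreover have "drop 3 (V i) = y # drop 4 (V i)"
    using basic(7) vote_length[OF voter_vote[OF i]] Cons_nth_drop_Suc[of 3 "V i"]
    unfolding y_def by simp
  then have "?Ta - ?T = {y}" using basic(8) assms(2) by simp
  ultimately show Ta: "?Ta = insert y (?T - {w})" and yT: "y \<notin> ?T" by auto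
  show yC: "y \<in> set tb"
    using Ta vote_top_subset[OF gs_manipulationD(2)[OF basic(1)]] by blast
  show gain: "gain i a c = of_bool (c = y) - of_bool (c = w)" for c
    unfolding approval_gain_def Ta using yT basic(3) by (cases "c = y"; cases "c = w") auto
  have yx: "y \<noteq> x" "y \<noteq> w" using yT basic(3,4) by auto
  have x_wins: "S V c + M * gain i a c < S V x" if "c \<in> set tb" "c \<noteq> x" for c
    using S_less_win_fun_upd[OF i that[unfolded x_def]] gain[of x] yx xw unfolding x_def by simp
  show yx_gap: "S V y + M < S V x" using x_wins[OF yC yx(1)] gain[of y] yx by simp
  show "S V w - M < S V x" using x_wins[OF win_mem xw[symmetric]] gain[of w] yx by simp
  assume c: "c \<in> set tb" "c \<noteq> w" "c \<noteq> x"
  show "S V c < S V x"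
  proof (cases "c = y")
    case True
    then show ?thesis using yx_gap M_pos by simp
  next
    case False
    then show ?thesis using x_wins[OF c(1,3)] gain[of c] c by simp
  qed
qed

lemma minimal_type2_two_swaps_top:
  assumes "minimal_type2 3 tb N V i a" "card (top 3 (V i) - top 3 a) \<noteq> 1"
  defines "x \<equiv> win (V(i := a))"
  obtains t Ad where "top 3 (V i) = {w, x, t}" "t \<noteq> w" "t \<noteq> x" "t \<in> set tb"
    "Ad \<subseteq> set tb" "Ad \<inter> top 3 (V i) = {}" "top 3 a = insert x Ad" "V i ! 3 \<in> Ad"
proof -
  let ?T = "top 3 (V i)" and ?Ta = "top 3 a"
  note basic = minimal_type2_basic[OF assms(1), folded x_def]
  have i: "i \<in> N" and xw: "x \<noteq> w"
    using basic(1,2) gs_manipulationD(4)[OF basic(1)] unfolding x_def by auto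
  have finT: "finite ?T" unfolding top_def by simp
  have "card ?T = 3" using vote_top_card[OF voter_vote[OF i]] basic(7) by simp
  then have card_Tx: "card (?T - {x}) = 2" using basic(4) finT by simp
  have sub: "?T - ?Ta \<subseteq> ?T - {x}" using basic(6) by auto
  have "card (?T - ?Ta) \<noteq> 0" using basic(3,5) finT by auto
  moreover have "card (?T - ?Ta) \<le> 2" using card_mono[OF _ sub] finT card_Tx by simp
  ultimately have two: "card (?T - ?Ta) = 2" using assms(2) by linarith
  then have T_Ta: "?T - ?Ta = ?T - {x}" using card_subset_eq[OF _ sub] finT card_Tx by simp
  have "card (?T - {x} - {w}) = 1" using card_Tx basic(3) xw finT by simp
  then obtain t where t: "?T - {x} - {w} = {t}" using card_1_singletonE by blast
  show thesis
  proof
    show T: "?T = {w, x, t}" and "t \<noteq> w" "t \<noteq> x" using t basic(3,4) by auto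
    then show "t \<in> set tb" using vote_top_subset[OF voter_vote[OF i]] by blast
    show "?Ta - ?T \<subseteq> set tb" using vote_top_subset[OF gs_manipulationD(2)[OF basic(1)]] by blast
    show "(?Ta - ?T) \<inter> ?T = {}" by blast
    show "?Ta = insert x (?Ta - ?T)" using T_Ta basic(6) by blast
    have "drop 3 (V i) = V i ! 3 # drop 4 (V i)"
      using basic(7) vote_length[OF voter_vote[OF i]] Cons_nth_drop_Suc[of 3 "V i"] by simp
    then show "V i ! 3 \<in> ?Ta - ?T" using basic(8) two by (simp add: numeral_2_eq_2)
  qed
qed

text \<open>Otherwise a vote with top three \<open>{x, t, y}\<close> would elect \<open>x\<close> while moving only \<open>w\<close> out,
contradicting the minimality of the number of candidates moved out.\<close>

lemma minimal_type2_two_swaps_third_above: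
  assumes "minimal_type2 3 tb N V i a"
  defines "x \<equiv> win (V(i := a))"
  assumes "top 3 (V i) - top 3 a = {w, t}" "top 3 (V i) = {w, x, t}" "t \<noteq> w" "t \<noteq> x"
    and "t \<in> set tb" "y \<in> set tb" "y \<notin> top 3 (V i)"
    and "S V y + M < S V x" "S V w - M < S V x"
    and "\<forall>c\<in>set tb. c \<noteq> w \<longrightarrow> c \<noteq> t \<longrightarrow> c \<noteq> x \<longrightarrow> S V c < S V x"
  shows "S V x < S V t"
proof (rule ccontr)
  note basic = minimal_type2_basic[OF assms(1), folded x_def]
  have i: "i \<in> N" and xw: "x \<noteq> w" and xC: "x \<in> set tb"
    using basic(1,2) gs_manipulationD(4)[OF basic(1)] win_mem unfolding x_def by auto
  have y: "y \<noteq> x" "y \<noteq> w" "y \<noteq> t" using assms(4,9) by auto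
  assume "\<not> S V x < S V t"
  moreover have "S V x \<noteq> S V t" using tb_score_inject[OF xC assms(7), of 3 N V] assms(6) by metis
  ultimately have tx: "S V t < S V x" by simp
  obtain b where b: "is_vote (set tb) b" "top 3 b = {x, t, y}"
    using vote_with_top3[OF xC assms(7,8)] assms(6) y by auto
  have gain_b: "gain i b c = of_bool (c = y) - of_bool (c = w)" for c
    unfolding approval_gain_def b(2) assms(4) using y assms(5,6) xw by auto
  have "win (V(i := b)) = x"
  proof (rule win_fun_upd_eqI[OF i xC])
    fix c assume c: "c \<in> set tb" "c \<noteq> x"
    show "S V c + M * gain i b c < S V x + M * gain i b x"
      using gain_b[of c] gain_b[of x] y xw tx c assms(10-12) by (cases "c = w \<or> c = t \<or> c = y") auto
  qed
  then have "gs_manipulation 3 tb N V i b"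
    using gs_manipulation_if_same_winner[OF basic(1) b(1)] unfolding x_def by simp
  moreover have "top 3 (V i) - top 3 b = {w}" using assms(4,5) b(2) y xw by auto
  ultimately show False using minimal_type2_le_card[OF assms(1)] assms(3,5) by fastforce
qed

lemma minimal_type2_two_swaps_scores:
  assumes "minimal_type2 3 tb N V i a"
  defines "x \<equiv> win (V(i := a))"
  assumes "top 3 (V i) = {w, x, t}" "t \<noteq> w" "t \<noteq> x" "t \<in> set tb"
    and "Ad \<subseteq> set tb" "Ad \<inter> top 3 (V i) = {}" "top 3 a = insert x Ad" "V i ! 3 \<in> Ad"
  shows "gain i a c = of_bool (c \<in> Ad) - of_bool (c = w \<or> c = t)"
    "\<forall>c\<in>Ad. S V c + M < S V x" "S V w - M < S V x" "S V t - M < S V x"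
    "\<forall>c\<in>set tb. c \<noteq> w \<longrightarrow> c \<noteq> t \<longrightarrow> c \<noteq> x \<longrightarrow> S V c < S V x"
    "S V x < S V t" "\<forall>c\<in>set tb. c \<noteq> w \<longrightarrow> c \<noteq> t \<longrightarrow> S V c < S V t"
proof -
  note basic = minimal_type2_basic[OF assms(1), folded x_def]
  have i: "i \<in> N" and xw: "x \<noteq> w" and xC: "x \<in> set tb"
    using basic(1,2) gs_manipulationD(4)[OF basic(1)] win_mem unfolding x_def by auto
  show gain: "gain i a c = of_bool (c \<in> Ad) - of_bool (c = w \<or> c = t)" for c
    unfolding approval_gain_def using assms(3-5,8,9) xw by (cases "c = x"; cases "c \<in> Ad") auto
  have x_wins: "S V c + M * gain i a c < S V x" if "c \<in> set tb" "c \<noteq> x" for c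
    using S_less_win_fun_upd[OF i that[unfolded x_def]] gain[of x] assms(3-5,8) xw
    unfolding x_def by auto
  show Ad_gap: "\<forall>c\<in>Ad. S V c + M < S V x"
  proof
    fix c assume c: "c \<in> Ad"
    then have "c \<in> set tb" "c \<noteq> x" "c \<noteq> w" "c \<noteq> t" using assms(3,7,8) by auto
    then show "S V c + M < S V x" using x_wins[of c] gain[of c] c by simp
  qed
  show w_gap: "S V w - M < S V x" using x_wins[OF win_mem xw[symmetric]] gain[of w] assms(3,8)
    by auto
  show t_gap: "S V t - M < S V x" using x_wins[OF assms(6,5)] gain[of t] assms(3,8) by auto
  show x_above: "\<forall>c\<in>set tb. c \<noteq> w \<longrightarrow> c \<noteq> t \<longrightarrow> c \<noteq> x \<longrightarrow> S V c < S V x"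
  proof (intro ballI impI)
    fix c assume c: "c \<in> set tb" "c \<noteq> w" "c \<noteq> t" "c \<noteq> x"
    show "S V c < S V x"
    proof (cases "c \<in> Ad")
      case True
      then show ?thesis using Ad_gap M_pos by fastforce
    next
      case False
      then show ?thesis using x_wins[OF c(1,4)] gain[of c] c by simp
    qed
  qed
  have "top 3 (V i) - top 3 a = {w, t}" using assms(3,4,5,8,9) xw by auto
  moreover have "V i ! 3 \<in> set tb" "V i ! 3 \<notin> top 3 (V i)" using assms(7,8,10) by auto
  ultimately show "S V x < S V t"
    using minimal_type2_two_swaps_third_above[OF assms(1)] assms(3-6) Ad_gap w_gap x_above assms(10)
    unfolding x_def by blast
  then show "\<forall>c\<in>set tb. c \<noteq> w \<longrightarrow> c \<noteq> t \<longrightarrow> S V c < S V t"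
    using x_above by force
qed

definition runner_up :: 'c where
  "runner_up = (THE c. c \<in> set tb \<and> c \<noteq> w \<and> (\<forall>d\<in>set tb. d \<noteq> w \<longrightarrow> d \<noteq> c \<longrightarrow> S V d < S V c))"

lemma runner_up_eqI:
  assumes "c \<in> set tb" "c \<noteq> w" "\<forall>d\<in>set tb. d \<noteq> w \<longrightarrow> d \<noteq> c \<longrightarrow> S V d < S V c"
  shows "runner_up = c"
  unfolding runner_up_def
proof (rule the_equality)
  fix c' assume c': "c' \<in> set tb \<and> c' \<noteq> w \<and> (\<forall>d\<in>set tb. d \<noteq> w \<longrightarrow> d \<noteq> c' \<longrightarrow> S V d < S V c')"
  show "c' = c"
  proof (rule ccontr)
    assume "c' \<noteq> c"
    then have "S V c' < S V c" "S V c < S V c'" using assms c' by auto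
    then show False by simp
  qed
qed (use assms in blast)

lemma minimal_type2_two_swaps_top_eq:
  assumes "minimal_type2 3 tb N V i a" "card (top 3 (V i) - top 3 a) \<noteq> 1"
  shows "top 3 a = insert (win (V(i := a))) (top 3 a - top 3 (V i))"
proof -
  obtain t Ad where "top 3 (V i) = {w, win (V(i := a)), t}" "t \<noteq> w"
    "t \<noteq> win (V(i := a))" "t \<in> set tb" "Ad \<subseteq> set tb" "Ad \<inter> top 3 (V i) = {}"
    "top 3 a = insert (win (V(i := a))) Ad" "V i ! 3 \<in> Ad"
    by (rule minimal_type2_two_swaps_top[OF assms])
  then show ?thesis by blast
qed

lemma minimal_type1_not_type2:
  "minimal_type1 3 tb N V i a \<Longrightarrow> \<not> minimal_type2 3 tb N V i b"
  unfolding minimal_type1_def minimal_type2_def Let_def by auto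

lemma minimal_manipulation_gs:
  "minimal_manipulation 3 tb N V i a \<Longrightarrow> gs_manipulation 3 tb N V i a"
  unfolding minimal_manipulation_def minimal_type1_def minimal_type2_def Let_def by auto

lemma minimal_manipulation_top_eq:
  assumes "minimal_manipulation 3 tb N V i a" "minimal_manipulation 3 tb N V i b"
  shows "top 3 a = top 3 b"
proof -
  have ga: "gs_manipulation 3 tb N V i a" and gb: "gs_manipulation 3 tb N V i b"
    using assms minimal_manipulation_gs by auto
  have same: "win (V(i := a)) = win (V(i := b))"
    by (rule gs_manipulation_same_winner[OF ga gb])
  consider "minimal_type1 3 tb N V i a" "minimal_type1 3 tb N V i b"
    | "minimal_type2 3 tb N V i a" "minimal_type2 3 tb N V i b"
    using assms minimal_type1_not_type2 unfolding minimal_manipulation_def by blast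
  then show ?thesis
  proof cases
    case 1
    then show ?thesis using minimal_type1_shape(9)[OF 1(1)] minimal_type1_shape(9)[OF 1(2)] same
      by simp
  next
    case 2
    have card_eq: "card (top 3 (V i) - top 3 a) = card (top 3 (V i) - top 3 b)"
      using minimal_type2_le_card[OF 2(1) gb] minimal_type2_le_card[OF 2(2) ga] by simp
    show ?thesis
    proof (cases "card (top 3 (V i) - top 3 a) = 1")
      case True
      then show ?thesis
        using minimal_type2_one_swap(1)[OF 2(1)] minimal_type2_one_swap(1)[OF 2(2)] card_eq by simp
    next
      case False
      have "top 3 a - top 3 (V i) = top 3 b - top 3 (V i)"
        using minimal_type2_basic(8)[OF 2(1)] minimal_type2_basic(8)[OF 2(2)] card_eq by simp
      then have "insert (win (V(i := a))) (top 3 a - top 3 (V i))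
          = insert (win (V(i := b))) (top 3 b - top 3 (V i))"
        using same by simp
      with minimal_type2_two_swaps_top_eq[OF 2(1) False]
        minimal_type2_two_swaps_top_eq[OF 2(2) False[unfolded card_eq]] show ?thesis by argo
    qed
  qed
qed

end

section \<open>Stable sets of manipulating players\<close>

locale manipulation_profile = approval3_profile tb N V
  for tb :: "'c list" and N :: "'v set" and V :: "'v \<Rightarrow> 'c list" +
  fixes P :: "'v set" and a :: "'v \<Rightarrow> 'c list"
  assumes P_subset: "P \<subseteq> N" and minimal: "\<forall>p\<in>P. minimal_manipulation 3 tb N V p (a p)"
begin

text \<open>In \<open>override_on V a D\<close> exactly the players in \<open>D\<close> manipulate.\<close>

abbreviation "outcome D \<equiv> win (override_on V a D)"
abbreviation "target p \<equiv> win (V(p := a p))"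
abbreviation "\<delta> p \<equiv> gain p (a p)"

lemma manipulator_voter: "p \<in> P \<Longrightarrow> p \<in> N"
  using P_subset by auto

lemma distinct_manipulator_vote: "p \<in> P \<Longrightarrow> distinct (V p)"
  using distinct_vote manipulator_voter by blast

lemma set_manipulator_vote: "p \<in> P \<Longrightarrow> set (V p) = set tb"
  using set_vote manipulator_voter by blast

lemma gs_manipulation_chosen: "p \<in> P \<Longrightarrow> gs_manipulation 3 tb N V p (a p)"
  using minimal minimal_manipulation_gs by blast

lemma target_preferred: "p \<in> P \<Longrightarrow> prefers (V p) (target p) w"
  using gs_manipulationD(3)[OF gs_manipulation_chosen] .

lemma target_ne_winner: "p \<in> P \<Longrightarrow> target p \<noteq> w"
  using gs_manipulationD(4)[OF gs_manipulation_chosen] .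

lemma outcome_singleton: "outcome {p} = target p"
  by (simp add: override_on_insert)

lemma S_override_on_insert:
  "q \<in> P \<Longrightarrow> q \<notin> D \<Longrightarrow> S (override_on V a (insert q D)) c = S (override_on V a D) c + M * \<delta> q c"
  by (simp add: override_on_insert S_fun_upd manipulator_voter)

lemma S_override_on_remove:
  "q \<in> P \<Longrightarrow> q \<in> D \<Longrightarrow> S (override_on V a (D - {q})) c = S (override_on V a D) c - M * \<delta> q c"
  by (simp add: override_on_Diff_singleton S_fun_upd manipulator_voter approval_gain_def
    algebra_simps)

lemma S_pair:
  "p \<in> P \<Longrightarrow> q \<in> P \<Longrightarrow> p \<noteq> q \<Longrightarrow>
    S (override_on V a {q, p}) c = S V c + M * (\<delta> p c + \<delta> q c)"
  using S_override_on_insert[of q "{p}"] S_override_on_insert[of p "{}"]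
  by (simp add: algebra_simps)

lemma S_less_pair_outcome:
  assumes "p \<in> P" "q \<in> P" "p \<noteq> q" "c \<in> set tb" "c \<noteq> outcome {q, p}"
  shows "S V c + M * (\<delta> p c + \<delta> q c)
    < S V (outcome {q, p}) + M * (\<delta> p (outcome {q, p}) + \<delta> q (outcome {q, p}))"
  using S_less_win[OF assms(4,5)] by (simp add: S_pair assms(1-3))

lemma S_less_target:
  "p \<in> P \<Longrightarrow> c \<in> set tb \<Longrightarrow> c \<noteq> target p \<Longrightarrow>
    S V c + M * \<delta> p c < S V (target p) + M * \<delta> p (target p)"
  by (rule S_less_win_fun_upd[OF manipulator_voter])

definition added :: "'v \<Rightarrow> 'c set" where
  "added p = top 3 (a p) - top 3 (V p)"

lemma two_swaps_shape:
  assumes p: "minimal_type2 3 tb N V p (a p)" "card (top 3 (V p) - top 3 (a p)) \<noteq> 1"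
  shows "w \<in> top 3 (V p)" "target p \<in> top 3 (V p)" "top 3 (V p) = {w, target p, runner_up}"
    "runner_up \<noteq> w" "runner_up \<noteq> target p" "runner_up \<in> set tb"
    "added p \<subseteq> set tb" "added p \<inter> top 3 (V p) = {}" "top 3 (a p) = insert (target p) (added p)"
    "\<forall>c\<in>added p. S V c + M < S V (target p)" "S V (target p) < S V runner_up"
    "\<forall>c\<in>set tb. c \<noteq> w \<longrightarrow> c \<noteq> runner_up \<longrightarrow> c \<noteq> target p \<longrightarrow> S V c < S V (target p)"
    "S V w - M < S V (target p)" "S V runner_up - M < S V (target p)"
    "\<delta> p c = of_bool (c \<in> added p) - of_bool (c = w \<or> c = runner_up)"
    "\<forall>c\<in>set tb. c \<noteq> w \<longrightarrow> c \<noteq> runner_up \<longrightarrow> S V c < S V runner_up"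
proof -
  obtain t Ad where top: "top 3 (V p) = {w, target p, t}" "t \<noteq> w" "t \<noteq> target p" "t \<in> set tb"
    "Ad \<subseteq> set tb" "Ad \<inter> top 3 (V p) = {}" "top 3 (a p) = insert (target p) Ad" "V p ! 3 \<in> Ad"
    by (rule minimal_type2_two_swaps_top[OF p])
  note scores = minimal_type2_two_swaps_scores[OF p(1) top]
  have t: "t = runner_up" by (rule runner_up_eqI[symmetric]) (use top scores in auto)
  have Ad: "Ad = added p" unfolding added_def using top(1,3,6,7) by auto
  show "w \<in> top 3 (V p)" "target p \<in> top 3 (V p)" using top(1) by auto
  show "top 3 (V p) = {w, target p, runner_up}" "runner_up \<noteq> w" "runner_up \<noteq> target p"
    "runner_up \<in> set tb" "added p \<subseteq> set tb" "added p \<inter> top 3 (V p) = {}"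
    "top 3 (a p) = insert (target p) (added p)"
    "\<forall>c\<in>added p. S V c + M < S V (target p)" "S V (target p) < S V runner_up"
    "\<forall>c\<in>set tb. c \<noteq> w \<longrightarrow> c \<noteq> runner_up \<longrightarrow> c \<noteq> target p \<longrightarrow> S V c < S V (target p)"
    "S V w - M < S V (target p)" "S V runner_up - M < S V (target p)"
    "\<delta> p c = of_bool (c \<in> added p) - of_bool (c = w \<or> c = runner_up)"
    "\<forall>c\<in>set tb. c \<noteq> w \<longrightarrow> c \<noteq> runner_up \<longrightarrow> S V c < S V runner_up"
    using top scores unfolding t Ad by simp_all
qed

lemma type1_join_type1_not_preferred:
  assumes i: "i \<in> P" "minimal_type1 3 tb N V i (a i)"
    and j: "j \<in> P" "minimal_type1 3 tb N V j (a j)"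
    and ij: "i \<noteq> j" and le: "S V (target j) \<le> S V (target i)"
  shows "\<not> prefers (V j) (outcome {j, i}) (target i)"
proof
  assume pr: "prefers (V j) (outcome {j, i}) (target i)"
  note si = minimal_type1_shape[OF i(2)] and sj = minimal_type1_shape[OF j(2)]
  define u where "u = outcome {j, i}"
  have uC: "u \<in> set tb" unfolding u_def by (rule win_mem)
  have ux: "u \<noteq> target i" using pr prefers_irrefl[OF distinct_manipulator_vote[OF j(1)]] u_def
    by metis
  have u_wins: "S V c + M * (\<delta> i c + \<delta> j c) < S V u + M * (\<delta> i u + \<delta> j u)"
    if "c \<in> set tb" "c \<noteq> u" for c
    using S_less_pair_outcome[OF i(1) j(1) ij that(1) that(2)[unfolded u_def]] unfolding u_def .
  have xw: "target i \<noteq> w" "target j \<noteq> w" using target_ne_winner i j by auto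
  consider "target i = V j ! 2" | "target i \<noteq> V j ! 2" "u = target j"
    | "target i \<noteq> V j ! 2" "u \<noteq> target j"
    by blast
  then show False
  proof cases
    case 1
    have "2 < length (V j)" using sj(2,12) vote_length[OF voter_vote] by simp
    then have "u \<in> top 3 (V j)"
      using mem_top_if_prefers_nth[OF distinct_manipulator_vote[OF j(1)]] pr 1 u_def by simp
    then have u: "u \<noteq> target j" "u \<noteq> w" "u \<noteq> V j ! 2" using sj(3,4) ux 1 by auto
    then have "M * (\<delta> i u + \<delta> j u) \<le> 0" using si(10) sj(10) ux M_mult_mono[of _ 0] by simp
    then show False using u_wins[OF win_mem u(2)[symmetric]] S_less_win[OF uC u(2)] u
        si(8,10) sj(8,10) ux xw M_pos by (cases "u = V i ! 2") auto
  next
    case 2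
    then have "M * (\<delta> i u + \<delta> j u) \<le> M" using si(10) sj(10) ux M_mult_mono[of _ 1] by simp
    moreover have "M \<le> M * (\<delta> i (target i) + \<delta> j (target i))"
      using si(7,10) sj(10) 2(1) M_mult_mono[of 1] by simp
    ultimately show False using u_wins[OF win_mem ux[symmetric]] le 2(2) by simp
  next
    case 3
    then have "M * (\<delta> i u + \<delta> j u) \<le> - M * of_bool (u = V i ! 2)"
      using si(10) sj(10) ux M_mult_mono[of _ "- of_bool (u = V i ! 2)"] by simp
    moreover have "M \<le> M * (\<delta> i (target i) + \<delta> j (target i))"
      using si(7,10) sj(10) 3(1) M_mult_mono[of 1] by simp
    ultimately show False using u_wins[OF win_mem ux[symmetric]] si(11)[OF uC ux] by simp
  qed
qed

lemma type1_join_not_preferred: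
  assumes i: "i \<in> P" "minimal_type1 3 tb N V i (a i)" and j: "j \<in> P" and ij: "i \<noteq> j"
    and \<delta>j: "\<And>c. \<delta> j c = of_bool (c \<in> Ad) - of_bool (c \<in> R)"
    and R: "R \<subseteq> top 3 (V j)" "w \<in> R" "target j \<notin> R" and Ad: "Ad \<inter> top 3 (V j) = {}"
    and xj: "target j \<in> top 3 (V j)"
    and xi_in_R: "target i \<in> R \<Longrightarrow> \<forall>c\<in>set tb. c \<noteq> w \<longrightarrow> c \<noteq> target i \<longrightarrow> S V c < S V (target i)"
  shows "\<not> prefers (V j) (outcome {j, i}) (target i)"
proof
  assume pr: "prefers (V j) (outcome {j, i}) (target i)"
  note si = minimal_type1_shape[OF i(2)]
  define u where "u = outcome {j, i}"
  have uC: "u \<in> set tb" unfolding u_def by (rule win_mem)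
  have ux: "u \<noteq> target i" using pr prefers_irrefl[OF distinct_manipulator_vote[OF j]] u_def by metis
  have xw: "target i \<noteq> w" "target j \<noteq> w" using target_ne_winner i j by auto
  have m: "S V (target i) + M * (\<delta> i (target i) + \<delta> j (target i)) < S V u + M * (\<delta> i u + \<delta> j u)"
    using S_less_pair_outcome[OF i(1) j ij win_mem ux[symmetric, unfolded u_def]] unfolding u_def .
  have j_alone: "S V c + M * \<delta> j c < S V (target j)" if "c \<in> set tb" "c \<noteq> target j" for c
  proof -
    have "target j \<notin> Ad" using xj Ad by blast
    then show ?thesis using S_less_target[OF j that] \<delta>j[of "target j"] R(3) by simp
  qed
  have xj_below: "S V (target j) < S V w" using S_less_win[OF win_mem xw(2)] .
  have w_below: "S V w < S V (target i) + M" using si(8) si(11)[OF win_mem xw(1)[symmetric]] by simp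
  have gain_x: "M \<le> M * (\<delta> i (target i) + \<delta> j (target i))" if "target i \<notin> R"
    using si(7,10) \<delta>j that M_mult_mono[of 1] by simp
  have gain_x': "\<delta> i (target i) + \<delta> j (target i) = 0" if "target i \<in> R"
    using si(7,10) \<delta>j that R(1) Ad by auto
  have gain_u: "M * (\<delta> i u + \<delta> j u) \<le> M * of_bool (u \<in> Ad)"
    using si(10) \<delta>j ux by (intro M_mult_mono) auto
  consider "u \<in> Ad" | "u \<notin> Ad" "target i \<notin> R" | "u \<notin> Ad" "target i \<in> R" "u = w"
    | "u \<notin> Ad" "target i \<in> R" "u \<noteq> w"
    by blast
  then show False
  proof cases
    case 1
    then have "u \<notin> R" "u \<noteq> target j" using R(1) Ad xj by auto
    then have "S V u + M < S V (target j)" using j_alone[OF uC] \<delta>j 1 by simp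
    moreover have "S V (target j) < S V (target i)" if "target i \<in> R"
      using xi_in_R[OF that] win_mem xw(2) R(3) that by auto
    ultimately show False
      using m gain_u 1 gain_x gain_x' xj_below w_below by (cases "target i \<in> R") auto
  next
    case 2
    have "S V u \<le> S V w" using S_less_win[OF uC] by fastforce
    then show False using m gain_u 2 gain_x w_below by simp
  next
    case 3
    then have "\<delta> i u + \<delta> j u = -1" using si(8,10) \<delta>j R(2) xw(1) by simp
    then show False using m gain_x' 3 w_below by simp
  next
    case 4
    then show False using m gain_u gain_x' xi_in_R uC ux by auto
  qed
qed

lemma type1_join_type2_not_preferred:
  assumes i: "i \<in> P" "minimal_type1 3 tb N V i (a i)"
    and j: "j \<in> P" "minimal_type2 3 tb N V j (a j)"
    and ij: "i \<noteq> j"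
  shows "\<not> prefers (V j) (outcome {j, i}) (target i)"
proof (cases "card (top 3 (V j) - top 3 (a j)) = 1")
  case True
  note basic = minimal_type2_basic[OF j(2)] and swap = minimal_type2_one_swap[OF j(2) True]
  show ?thesis
    by (rule type1_join_not_preferred[OF i j(1) ij, of "{V j ! 3}" "{w}"])
      (use basic(3,4) swap(3,4) target_ne_winner i j in auto)
next
  case False
  note f = two_swaps_shape[OF j(2) False]
  show ?thesis
    by (rule type1_join_not_preferred[OF i j(1) ij, of "added j" "{w, runner_up}"])
      (use f target_ne_winner[OF i(1)] target_ne_winner[OF j(1)] in auto)
qed

lemma two_swaps_join_two_swaps_not_preferred:
  assumes p: "p \<in> P" "minimal_type2 3 tb N V p (a p)" "card (top 3 (V p) - top 3 (a p)) \<noteq> 1"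
    and q: "q \<in> P" "minimal_type2 3 tb N V q (a q)" "card (top 3 (V q) - top 3 (a q)) \<noteq> 1"
    and pq: "p \<noteq> q"
  shows "\<not> prefers (V q) (outcome {q, p}) (target p)"
proof
  assume pr: "prefers (V q) (outcome {q, p}) (target p)"
  note f = two_swaps_shape[OF p(2,3)] and g = two_swaps_shape[OF q(2,3)]
  let ?r = runner_up and ?x = "target p"
  have dq: "distinct (V q)" using distinct_manipulator_vote[OF q(1)] .
  have same_target: "target q = ?x"
    using f(12) g(12) f(2,3,5) g(2,3,5) win_mem target_ne_winner[OF p(1)] target_ne_winner[OF q(1)]
    by (metis less_asym)
  define u where "u = outcome {q, p}"
  have uC: "u \<in> set tb" unfolding u_def by (rule win_mem)
  have ux: "u \<noteq> ?x" using pr prefers_irrefl[OF dq] u_def by metis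
  have "\<delta> p ?x = 0" "\<delta> q ?x = 0" using f(2,5,8,15) g(2,5,8,15) same_target target_ne_winner[OF
    p(1)] by auto
  then have m: "S V ?x < S V u + M * (\<delta> p u + \<delta> q u)"
    using S_less_pair_outcome[OF p(1) q(1) pq win_mem ux[symmetric, unfolded u_def]]
      unfolding u_def by simp
  have "u \<notin> added q"
  proof
    assume "u \<in> added q"
    then have "prefers (V q) ?x u"
      using prefers_top[OF dq] g(2,8) same_target uC set_manipulator_vote[OF q(1)] by auto
    then show False using pr prefers_asym[OF dq] u_def by metis
  qed
  then have \<delta>q: "\<delta> q u = - of_bool (u = w \<or> u = ?r)" using g(15) by simp
  consider "u \<in> added p" | "u \<notin> added p" "u = w \<or> u = ?r" | "u \<notin> added p" "u \<noteq> w" "u \<noteq> ?r"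
    by blast
  then show False
  proof cases
    case 1
    then have "u \<noteq> w" "u \<noteq> ?r" using f(3,8) by auto
    then show False using 1 m \<delta>q f(10,15) by auto
  next
    case 2
    then have "S V ?x < S V u - 2 * M" using m \<delta>q f(15) by auto
    then show False using 2 f(13,14) M_pos by auto
  next
    case 3
    then show False using m \<delta>q f(12,15) uC ux by auto
  qed
qed

definition stable :: "'v set \<Rightarrow> bool" where
  "stable D \<longleftrightarrow> (\<forall>q\<in>P. \<not> prefers (V q) (outcome (insert q D)) (outcome D) \<and>
                        \<not> prefers (V q) (outcome (D - {q})) (outcome D))"

lemma stable_singleton:
  assumes p: "p \<in> P" and join: "\<And>q. q \<in> P \<Longrightarrow> q \<noteq> p \<Longrightarrow> \<not> prefers (V q) (outcome {q, p}) (target p)"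
  shows "stable {p}"
  unfolding stable_def
proof
  fix q assume q: "q \<in> P"
  show "\<not> prefers (V q) (outcome (insert q {p})) (outcome {p}) \<and>
    \<not> prefers (V q) (outcome ({p} - {q})) (outcome {p})"
  proof (cases "q = p")
    case True
    have "distinct (V p)" using distinct_manipulator_vote[OF p] .
    then show ?thesis using True target_preferred[OF p] outcome_singleton[of p]
        prefers_irrefl prefers_asym by fastforce
  next
    case False
    then show ?thesis using join[OF q False] outcome_singleton[of p]
        prefers_irrefl[OF distinct_manipulator_vote[OF q]] by (simp add: insert_commute)
  qed
qed

lemma exists_stable_type1:
  assumes "\<exists>p\<in>P. minimal_type1 3 tb N V p (a p)"
  shows "\<exists>D\<subseteq>P. stable D"
proof -
  let ?P1 = "{p \<in> P. minimal_type1 3 tb N V p (a p)}"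
  let ?i = "arg_min_on (\<lambda>p. - S V (target p)) ?P1"
  have "finite ?P1" using P_subset finite_N by (auto intro: finite_subset)
  moreover have "?P1 \<noteq> {}" using assms by blast
  ultimately have i: "?i \<in> P" "minimal_type1 3 tb N V ?i (a ?i)"
    and i_max: "\<And>j. j \<in> ?P1 \<Longrightarrow> S V (target j) \<le> S V (target ?i)"
    using arg_min_if_finite[of ?P1 "\<lambda>p. - S V (target p)"] by force+
  have "stable {?i}"
  proof (rule stable_singleton[OF i(1)])
    fix q assume q: "q \<in> P" "q \<noteq> ?i"
    show "\<not> prefers (V q) (outcome {q, ?i}) (target ?i)"
    proof (cases "minimal_type1 3 tb N V q (a q)")
      case True
      then show ?thesis using type1_join_type1_not_preferred[OF i q(1) True q(2)[symmetric]] i_max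
        q(1) by blast
    next
      case False
      then have "minimal_type2 3 tb N V q (a q)" using minimal q(1)
        unfolding minimal_manipulation_def by blast
      then show ?thesis using type1_join_type2_not_preferred[OF i q(1) _ q(2)[symmetric]] by blast
    qed
  qed
  then show ?thesis using i(1) by blast
qed

end

section \<open>Profiles in which all manipulations are of Type 2\<close>

locale type2_profile = manipulation_profile tb N V P a
  for tb :: "'c list" and N :: "'v set" and V :: "'v \<Rightarrow> 'c list" and P :: "'v set"
    and a :: "'v \<Rightarrow> 'c list" +
  assumes all_type2: "\<forall>p\<in>P. minimal_type2 3 tb N V p (a p)"
begin

definition one_swap_voters :: "'v set" where
  "one_swap_voters = {p \<in> P. card (top 3 (V p) - top 3 (a p)) = 1}"

abbreviation "r \<equiv> runner_up"

lemma finite_one_swap_voters: "finite one_swap_voters"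
  using P_subset finite_N unfolding one_swap_voters_def by (auto intro: finite_subset)

lemma one_swap_voter_in_P: "q \<in> one_swap_voters \<Longrightarrow> q \<in> P"
  unfolding one_swap_voters_def by blast

lemma one_swap_voter_shape:
  assumes "q \<in> one_swap_voters"
  shows "target q = r" "w \<in> top 3 (V q)" "r \<in> top 3 (V q)"
    "top 3 (a q) = insert (V q ! 3) (top 3 (V q) - {w})"
    "V q ! 3 \<in> set tb" "V q ! 3 \<notin> top 3 (V q)" "S V (V q ! 3) + M < S V r" "S V w - M < S V r"
    "\<delta> q c = of_bool (c = V q ! 3) - of_bool (c = w)"
proof -
  have q: "q \<in> P" "minimal_type2 3 tb N V q (a q)" "card (top 3 (V q) - top 3 (a q)) = 1"
    using assms all_type2 unfolding one_swap_voters_def by auto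
  note swap = minimal_type2_one_swap[OF q(2,3)] and basic = minimal_type2_basic[OF q(2)]
  show r: "target q = r"
    by (rule runner_up_eqI[symmetric]) (use win_mem target_ne_winner[OF q(1)] swap(7) in auto)
  show "w \<in> top 3 (V q)" "r \<in> top 3 (V q)" using basic(3,4) r by auto
  show "top 3 (a q) = insert (V q ! 3) (top 3 (V q) - {w})" "V q ! 3 \<in> set tb"
    "V q ! 3 \<notin> top 3 (V q)"
    "S V (V q ! 3) + M < S V r" "S V w - M < S V r"
    "\<delta> q c = of_bool (c = V q ! 3) - of_bool (c = w)"
    using swap(1-6) r by simp_all
qed

lemma two_swaps_voter:
  assumes "p \<in> P" "p \<notin> one_swap_voters"
  shows "minimal_type2 3 tb N V p (a p)" "card (top 3 (V p) - top 3 (a p)) \<noteq> 1"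
  using assms all_type2 unfolding one_swap_voters_def by auto

lemma S_override_on_runner_up:
  assumes "D \<subseteq> one_swap_voters"
  shows "S (override_on V a D) r = S V r"
proof (rule tb_score_override_on_eq, intro ballI)
  fix q assume "q \<in> D"
  then have q: "q \<in> one_swap_voters" using assms by blast
  then have "r \<noteq> w" using one_swap_voter_shape(1)[OF q] target_ne_winner
    unfolding one_swap_voters_def by force
  then show "r \<in> top 3 (a q) \<longleftrightarrow> r \<in> top 3 (V q)" using one_swap_voter_shape(3,4)[OF q] by auto
qed

lemma S_override_on_one_swap_eq:
  assumes "D \<subseteq> one_swap_voters" "c \<noteq> w" "\<forall>q\<in>D. V q ! 3 \<noteq> c"
  shows "S (override_on V a D) c = S V c"
proof (rule tb_score_override_on_eq, intro ballI)
  fix q assume "q \<in> D"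
  moreover from this have "q \<in> one_swap_voters" using assms(1) by blast
  ultimately show "c \<in> top 3 (a q) \<longleftrightarrow> c \<in> top 3 (V q)"
    using one_swap_voter_shape(4) assms(2,3) by auto
qed

lemma S_override_on_one_swap_raised:
  assumes "D \<subseteq> one_swap_voters" "q \<in> D"
  shows "S V (V q ! 3) + M \<le> S (override_on V a D) (V q ! 3)"
proof (rule tb_score_override_on_gain[OF finite_N _ assms(2)])
  have q: "q \<in> one_swap_voters" using assms by blast
  then show "q \<in> N" using manipulator_voter unfolding one_swap_voters_def by blast
  show "V q ! 3 \<in> top 3 (a q)" "V q ! 3 \<notin> top 3 (V q)" using one_swap_voter_shape(4,6)[OF q] by auto
  have "V q ! 3 \<noteq> w" using one_swap_voter_shape(2,6)[OF q] by auto
  then show "\<forall>q'\<in>D. V q ! 3 \<in> top 3 (V q') \<longrightarrow> V q ! 3 \<in> top 3 (a q')"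
    using one_swap_voter_shape(4) assms(1) by blast
qed

lemma S_override_on_one_swap_winner:
  assumes "D \<subseteq> one_swap_voters" "D \<noteq> {}"
  shows "S (override_on V a D) w \<le> S V w - M"
proof -
  obtain q where q: "q \<in> D" using assms(2) by blast
  then have q1: "q \<in> one_swap_voters" using assms(1) by blast
  show ?thesis
  proof (rule tb_score_override_on_loss[OF finite_N _ q])
    show "q \<in> N" using q1 manipulator_voter unfolding one_swap_voters_def by blast
    show "w \<notin> top 3 (a q)" "w \<in> top 3 (V q)" using one_swap_voter_shape(2,4,6)[OF q1] by auto
    show "\<forall>q'\<in>D. w \<in> top 3 (a q') \<longrightarrow> w \<in> top 3 (V q')"
      using one_swap_voter_shape(2) assms(1) by blast
  qed
qed

text \<open>A largest \<open>runner_up_group\<close> is stable unless a player outside \<open>one_swap_voters\<close> wants to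
join it, and then this player alone is stable.\<close>

definition runner_up_group :: "'v set \<Rightarrow> bool" where
  "runner_up_group D \<longleftrightarrow> D \<subseteq> one_swap_voters \<and> D \<noteq> {} \<and> outcome D = r"

lemma runner_up_group_max_exists:
  assumes "one_swap_voters \<noteq> {}"
  obtains D where "runner_up_group D" "\<And>D'. runner_up_group D' \<Longrightarrow> card D' \<le> card D"
proof -
  let ?F = "{D. runner_up_group D}"
  obtain i where i: "i \<in> one_swap_voters" using assms by blast
  have "runner_up_group {i}"
    unfolding runner_up_group_def using i one_swap_voter_shape(1)[OF i] outcome_singleton by simp
  moreover have "finite ?F"
    using finite_one_swap_voters
    by (auto simp: runner_up_group_def intro: finite_subset[of _ "Pow one_swap_voters"])
  ultimately have "Max (card ` ?F) \<in> card ` ?F" by (intro Max_in) auto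
  then obtain D where "D \<in> ?F" "card D = Max (card ` ?F)" by (rule imageE) simp
  moreover have "\<forall>D'\<in>?F. card D' \<le> Max (card ` ?F)" using \<open>finite ?F\<close> by simp
  ultimately have "D \<in> ?F" "\<forall>D'\<in>?F. card D' \<le> card D" by auto
  then show thesis using that by blast
qed

lemma runner_up_group_wins:
  "runner_up_group D \<Longrightarrow> d \<in> set tb \<Longrightarrow> d \<noteq> r \<Longrightarrow> S (override_on V a D) d < S V r"
  using S_less_win[of d "override_on V a D"] S_override_on_runner_up
  unfolding runner_up_group_def by metis

lemma runner_up_mem: "one_swap_voters \<noteq> {} \<Longrightarrow> r \<in> set tb"
  using one_swap_voter_shape(1) win_mem by (metis ex_in_conv)

text \<open>An uncovered one-swap voter could join the group: his fourth choice gains a single point,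
so the runner-up still wins.\<close>

lemma max_runner_up_group_covers:
  assumes Sm: "runner_up_group Sm" and max: "\<And>D. runner_up_group D \<Longrightarrow> card D \<le> card Sm"
    and q: "q \<in> one_swap_voters"
  shows "\<exists>q'\<in>Sm. V q' ! 3 = V q ! 3"
proof (rule ccontr)
  assume uncovered: "\<not> (\<exists>q'\<in>Sm. V q' ! 3 = V q ! 3)"
  let ?y = "V q ! 3" and ?S' = "S (override_on V a (insert q Sm))"
  have qSm: "q \<notin> Sm" using uncovered by blast
  have Sm1: "Sm \<subseteq> one_swap_voters" using Sm unfolding runner_up_group_def by blast
  note shape = one_swap_voter_shape[OF q]
  have y: "?y \<noteq> w" "?y \<noteq> r" using shape(2,3,6) by auto
  have rw: "r \<noteq> w" using shape(1) target_ne_winner[OF one_swap_voter_in_P[OF q]] by simp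
  have ins: "?S' d = S (override_on V a Sm) d + M * (of_bool (d = ?y) - of_bool (d = w))" for d
    using S_override_on_insert[OF one_swap_voter_in_P[OF q] qSm] shape(9) by simp
  have "outcome (insert q Sm) = r"
  proof (rule win_eqI[OF runner_up_mem])
    show "one_swap_voters \<noteq> {}" using q by blast
    fix d assume d: "d \<in> set tb" "d \<noteq> r"
    have "?S' r = S V r" using ins[of r] y rw S_override_on_runner_up[OF Sm1] by simp
    moreover have "?S' d < S V r"
    proof (cases "d = ?y")
      case True
      then show ?thesis using ins[of d] y S_override_on_one_swap_eq[OF Sm1 y(1)] uncovered
        shape(7) by auto
    next
      case False
      then show ?thesis using ins[of d] runner_up_group_wins[OF Sm d] M_pos by (cases "d = w") auto
    qed
    ultimately show "?S' d < ?S' r" by simp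
  qed
  then have "runner_up_group (insert q Sm)" using Sm q unfolding runner_up_group_def by blast
  from max[OF this] show False
    using qSm Sm1 finite_one_swap_voters by (simp add: finite_subset)
qed

lemma runner_up_group_no_leave:
  assumes Sm: "runner_up_group Sm" and q: "q \<in> Sm"
  shows "\<not> prefers (V q) (outcome (Sm - {q})) r"
proof
  assume pr: "prefers (V q) (outcome (Sm - {q})) r"
  have Sm1: "Sm \<subseteq> one_swap_voters" using Sm unfolding runner_up_group_def by blast
  then have q1: "q \<in> one_swap_voters" using q by blast
  note shape = one_swap_voter_shape[OF q1]
  have dq: "distinct (V q)" using distinct_manipulator_vote[OF one_swap_voter_in_P[OF q1]] .
  show False
  proof (cases "Sm - {q} = {}")
    case True
    then have "outcome (Sm - {q}) = w" by (simp only: override_on_emptyset)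
    then show False
      using pr target_preferred[OF one_swap_voter_in_P[OF q1]] shape(1) prefers_asym[OF dq] by simp
  next
    case nonempty: False
    have sub: "Sm - {q} \<subseteq> one_swap_voters" using Sm1 by blast
    have "outcome (Sm - {q}) = r"
    proof (rule win_eqI[OF runner_up_mem])
      show "one_swap_voters \<noteq> {}" using q1 by blast
      fix d assume d: "d \<in> set tb" "d \<noteq> r"
      show "S (override_on V a (Sm - {q})) d < S (override_on V a (Sm - {q})) r"
      proof (cases "d = w")
        case True
        then show ?thesis
          using S_override_on_one_swap_winner[OF sub nonempty] S_override_on_runner_up[OF sub]
            shape(8) by simp
      next
        case False
        then show ?thesis
          using S_override_on_remove[OF one_swap_voter_in_P[OF q1] q, of d] shape(9)[of d] M_pos
            runner_up_group_wins[OF Sm d] S_override_on_runner_up[OF sub]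
          by (cases "d = V q ! 3") auto
      qed
    qed
    then show False using pr prefers_irrefl[OF dq] by simp
  qed
qed

lemma runner_up_group_no_join:
  assumes Sm: "runner_up_group Sm" and q: "q \<in> one_swap_voters" "q \<notin> Sm"
  shows "\<not> prefers (V q) (outcome (insert q Sm)) r"
proof
  assume pr: "prefers (V q) (outcome (insert q Sm)) r"
  let ?u = "outcome (insert q Sm)" and ?S' = "S (override_on V a (insert q Sm))"
  note shape = one_swap_voter_shape[OF q(1)]
  have qP: "q \<in> P" using one_swap_voter_in_P[OF q(1)] .
  have dq: "distinct (V q)" using distinct_manipulator_vote[OF qP] .
  have Sm1: "Sm \<subseteq> one_swap_voters" using Sm unfolding runner_up_group_def by blast
  have ur: "?u \<noteq> r" using pr prefers_irrefl[OF dq] by metis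
  have rw: "r \<noteq> w" using shape(1) target_ne_winner[OF qP] by simp
  have ins: "?S' d = S (override_on V a Sm) d + M * (of_bool (d = V q ! 3) - of_bool (d = w))" for d
    using S_override_on_insert[OF qP q(2)] shape(9) by simp
  have "?u \<noteq> V q ! 3"
  proof
    assume "?u = V q ! 3"
    moreover have "prefers (V q) r (V q ! 3)"
      using prefers_top[OF dq shape(3)] shape(5,6) set_manipulator_vote[OF qP] by simp
    ultimately show False using pr prefers_asym[OF dq] by metis
  qed
  then have "?S' ?u < S V r"
    using ins[of ?u] runner_up_group_wins[OF Sm win_mem ur] M_pos by (cases "?u = w") auto
  moreover have "?S' r = S V r"
    using ins[of r] shape(2,3,6) rw S_override_on_runner_up[OF Sm1] by auto
  moreover have "?S' r < ?S' ?u"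
    using S_less_win[OF runner_up_mem ur[symmetric]] q(1) by blast
  ultimately show False by simp
qed

lemma runner_up_group_two_swaps_join:
  assumes Sm: "runner_up_group Sm" and q: "q \<in> P" "q \<notin> one_swap_voters"
    and pr: "prefers (V q) (outcome (insert q Sm)) r"
    and d: "d \<in> set tb" "d \<noteq> target q"
  shows "S (override_on V a (insert q Sm)) d < S V (target q)"
proof -
  note g = two_swaps_shape[OF two_swaps_voter[OF q]]
  let ?u = "outcome (insert q Sm)" and ?S' = "S (override_on V a (insert q Sm))"
  have Sm1: "Sm \<subseteq> one_swap_voters" and Sm_ne: "Sm \<noteq> {}"
    using Sm unfolding runner_up_group_def by auto
  have qSm: "q \<notin> Sm" using q(2) Sm1 by blast
  have dq: "distinct (V q)" using distinct_manipulator_vote[OF q(1)] .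
  have xw: "target q \<noteq> w" using target_ne_winner[OF q(1)] .
  have ins: "?S' c = S (override_on V a Sm) c + M * \<delta> q c" for c
    using S_override_on_insert[OF q(1) qSm] .
  have "\<forall>q'\<in>Sm. V q' ! 3 \<noteq> target q"
    using one_swap_voter_shape(7) g(14) Sm1 by fastforce
  then have Sx: "?S' (target q) = S V (target q)"
    using ins[of "target q"] S_override_on_one_swap_eq[OF Sm1 xw] g(2,5,8,15) xw by auto
  have "?u \<in> top 3 (V q)"
  proof (rule ccontr)
    assume u: "?u \<notin> top 3 (V q)"
    have "?u \<in> set (V q)" using win_mem set_manipulator_vote[OF q(1)] by simp
    then have "prefers (V q) r ?u" using prefers_top[OF dq _ _ u] g(3) by simp
    then show False using pr prefers_asym[OF dq] by blast
  qed
  moreover have "?u \<noteq> r" using pr prefers_irrefl[OF dq] by metis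
  moreover have "?u \<noteq> w"
  proof
    assume uw: "?u = w"
    have "\<delta> q w = -1" using g(1,8,15) by auto
    then have "?S' w \<le> S V w - 2 * M" using ins[of w] S_override_on_one_swap_winner[OF Sm1 Sm_ne]
      by simp
    moreover have "?S' (target q) < ?S' w" using S_less_win[OF win_mem] xw uw by metis
    ultimately show False using Sx g(13) M_pos by simp
  qed
  ultimately have "?u = target q" using g(3) by blast
  then show ?thesis using S_less_win[OF d(1)] d(2) Sx by metis
qed

lemma one_swap_join_two_swaps_not_preferred:
  assumes q: "q \<in> P" "q \<notin> one_swap_voters" and q': "q' \<in> one_swap_voters" "q' \<noteq> q"
    and Sm1: "Sm \<subseteq> one_swap_voters" and covered: "\<exists>q''\<in>Sm. V q'' ! 3 = V q' ! 3"
    and wins: "\<And>d. d \<in> set tb \<Longrightarrow> d \<noteq> target q \<Longrightarrow> S (override_on V a (insert q Sm)) d < S V (target q)"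
  shows "\<not> prefers (V q') (outcome {q', q}) (target q)"
proof
  assume pr: "prefers (V q') (outcome {q', q}) (target q)"
  note g = two_swaps_shape[OF two_swaps_voter[OF q]] and lf = one_swap_voter_shape[OF q'(1)]
  let ?c = "V q' ! 3" and ?u = "outcome {q', q}"
  have q'P: "q' \<in> P" using one_swap_voter_in_P[OF q'(1)] .
  have xw: "target q \<noteq> w" using target_ne_winner[OF q(1)] .
  have gain_x: "\<delta> q (target q) = 0" using g(2,5,8,15) xw by auto
  have cx: "?c \<noteq> target q" using lf(7) g(14) by auto
  have cw: "?c \<noteq> w" using lf(2,6) by auto
  have ux: "?u \<noteq> target q" using pr prefers_irrefl[OF distinct_manipulator_vote[OF q'P]] by metis
  have m: "S V (target q) < S V ?u + M * (\<delta> q ?u + \<delta> q' ?u)"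
    using S_less_pair_outcome[OF q(1) q'P q'(2)[symmetric] win_mem ux[symmetric]]
      gain_x lf(9)[of "target q"] cx xw by simp
  have "?u = ?c"
  proof (rule ccontr)
    assume "?u \<noteq> ?c"
    then have "M * \<delta> q' ?u \<le> 0" using lf(9)[of ?u] M_pos by simp
    then show False using m S_less_target[OF q(1) win_mem ux] gain_x by (simp add: distrib_left)
  qed
  then have m2: "S V (target q) < S V ?c + M * \<delta> q ?c + M"
    using m lf(9)[of ?c] cw by (simp add: distrib_left)
  obtain q'' where q'': "q'' \<in> Sm" "V q'' ! 3 = ?c" using covered by blast
  have "S V ?c + M \<le> S (override_on V a Sm) ?c"
    using S_override_on_one_swap_raised[OF Sm1 q''(1)] q''(2) by simp
  moreover have "q \<notin> Sm" using q(2) Sm1 by blast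
  ultimately have "S V (target q) < S (override_on V a (insert q Sm)) ?c"
    using S_override_on_insert[OF q(1), of Sm ?c] m2 by simp
  then show False using wins[OF lf(5) cx] by simp
qed

lemma two_swaps_voter_stable:
  assumes q: "q \<in> P" "q \<notin> one_swap_voters" and Sm1: "Sm \<subseteq> one_swap_voters"
    and cover: "\<forall>q'\<in>one_swap_voters. \<exists>q''\<in>Sm. V q'' ! 3 = V q' ! 3"
    and wins: "\<And>d. d \<in> set tb \<Longrightarrow> d \<noteq> target q \<Longrightarrow> S (override_on V a (insert q Sm)) d < S V (target q)"
  shows "stable {q}"
proof (rule stable_singleton[OF q(1)])
  fix q' assume q': "q' \<in> P" "q' \<noteq> q"
  show "\<not> prefers (V q') (outcome {q', q}) (target q)"
  proof (cases "q' \<in> one_swap_voters")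
    case False
    show ?thesis
      by (rule two_swaps_join_two_swaps_not_preferred[OF q(1) two_swaps_voter[OF q] q'(1)
          two_swaps_voter[OF q'(1) False] q'(2)[symmetric]])
  next
    case True
    then show ?thesis
      using one_swap_join_two_swaps_not_preferred[OF q True q'(2) Sm1 _ wins] cover by blast
  qed
qed

lemma exists_stable_one_swap:
  assumes "one_swap_voters \<noteq> {}"
  shows "\<exists>D\<subseteq>P. stable D"
proof -
  obtain Sm where Sm: "runner_up_group Sm" and max: "\<And>D. runner_up_group D \<Longrightarrow> card D \<le> card Sm"
    using runner_up_group_max_exists[OF assms] by blast
  have Sm1: "Sm \<subseteq> one_swap_voters" and WSm: "outcome Sm = r"
    using Sm unfolding runner_up_group_def by auto
  have SmP: "Sm \<subseteq> P" using Sm1 one_swap_voter_in_P by blast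
  show ?thesis
  proof (cases "stable Sm")
    case True
    then show ?thesis using SmP by blast
  next
    case False
    then obtain q where q: "q \<in> P"
      and deviation: "prefers (V q) (outcome (insert q Sm)) r \<or>
        prefers (V q) (outcome (Sm - {q})) r"
      unfolding stable_def WSm by blast
    have "q \<notin> one_swap_voters"
    proof
      assume q1: "q \<in> one_swap_voters"
      show False
      proof (cases "q \<in> Sm")
        case True
        then show False using deviation runner_up_group_no_leave[OF Sm] WSm
            prefers_irrefl[OF distinct_manipulator_vote[OF q]] by (simp add: insert_absorb)
      next
        case False
        then have "Sm - {q} = Sm" by blast
        then show False using False deviation runner_up_group_no_join[OF Sm q1] WSm
            prefers_irrefl[OF distinct_manipulator_vote[OF q]] by metis
      qed
    qed
    moreover from this have "Sm - {q} = Sm" using Sm1 by blast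
    then have "prefers (V q) (outcome (insert q Sm)) r"
      using deviation WSm prefers_irrefl[OF distinct_manipulator_vote[OF q]] by metis
    ultimately have "stable {q}"
      using two_swaps_voter_stable[OF q _ Sm1] max_runner_up_group_covers[OF Sm max]
        runner_up_group_two_swaps_join[OF Sm q] by blast
    then show ?thesis using q by blast
  qed
qed

lemma exists_stable_two_swaps:
  assumes "p \<in> P" "one_swap_voters = {}"
  shows "\<exists>D\<subseteq>P. stable D"
proof -
  have "stable {p}"
  proof (rule stable_singleton[OF assms(1)])
    fix q assume "q \<in> P" "q \<noteq> p"
    then show "\<not> prefers (V q) (outcome {q, p}) (target p)"
      using two_swaps_join_two_swaps_not_preferred all_type2 assms
      unfolding one_swap_voters_def by blast
  qed
  then show ?thesis using assms(1) by blast
qed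

end

section \<open>Pure Nash equilibria\<close>

context manipulation_profile
begin

lemma exists_stable: "\<exists>D\<subseteq>P. stable D"
proof -
  consider "P = {}" | "\<exists>p\<in>P. minimal_type1 3 tb N V p (a p)"
    | p where "p \<in> P" "\<forall>p\<in>P. minimal_type2 3 tb N V p (a p)"
    using minimal unfolding minimal_manipulation_def by blast
  then show ?thesis
  proof cases
    case 1
    then show ?thesis unfolding stable_def by blast
  next
    case 2
    then show ?thesis by (rule exists_stable_type1)
  next
    case 3
    interpret type2_profile tb N V P a
      by unfold_locales (use 3(2) in blast)
    show ?thesis
      using exists_stable_one_swap exists_stable_two_swaps[OF 3(1)] by blast
  qed
qed

text \<open>An action of a player is his sincere vote or a minimal manipulation, which has the same
top three as his chosen one; so deviating amounts to leaving or joining \<open>D\<close>.\<close>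

lemma pure_nash_if_stable:
  assumes game: "gs_game 3 tb N V A" and minimality: "minimality_assumption 3 tb N V A"
    and P_eq: "P = {p \<in> players 3 tb N V. \<exists>b\<in>A p. gs_manipulation 3 tb N V p b}"
    and a: "\<And>p. p \<in> P \<Longrightarrow> a p \<in> A p"
    and D: "D \<subseteq> P" "stable D"
  shows "pure_nash 3 tb N V A (override_on V a D)"
  unfolding pure_nash_def
proof (intro conjI ballI)
  have actions: "V i \<in> A i" "A i \<subseteq> insert (V i) {b. gs_manipulation 3 tb N V i b}"
    if "i \<in> players 3 tb N V" for i
    using game that unfolding gs_game_def by auto
  show "action_profile 3 tb N V A (override_on V a D)"
    unfolding action_profile_def override_on_def using D(1) a actions P_eq by auto
  fix i b assume i: "i \<in> players 3 tb N V" and b: "b \<in> A i"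
  have dist: "distinct (V i)" using distinct_vote i unfolding players_def by blast
  have no_dev: "\<not> prefers (V i) (outcome (insert i D)) (outcome D) \<and>
      \<not> prefers (V i) (outcome (D - {i})) (outcome D)"
    if "i \<in> P" using D(2) that unfolding stable_def by blast
  consider "b = V i" | "gs_manipulation 3 tb N V i b" using actions(2)[OF i] b by blast
  then show "\<not> prefers (V i) (win ((override_on V a D)(i := b))) (outcome D)"
  proof cases
    case 1
    then have sincere: "(override_on V a D)(i := b) = override_on V a (D - {i})"
      by (simp add: override_on_Diff_singleton)
    show ?thesis
    proof (cases "i \<in> P")
      case True
      then show ?thesis using no_dev sincere by simp
    next
      case False
      then have "D - {i} = D" using D(1) by blast
      then show ?thesis using sincere prefers_irrefl[OF dist] by simp
    qed
  next
    case 2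
    then have iP: "i \<in> P" using P_eq i b by blast
    have "top 3 b = top 3 (a i)"
      using minimal_manipulation_top_eq minimality i b 2 minimal iP
      unfolding minimality_assumption_def
        by blast
    then have "win ((override_on V a D)(i := b)) = outcome (insert i D)"
      by (intro kapp_top_cong) (simp add: override_on_insert)
    then show ?thesis using no_dev[OF iP] by simp
  qed
qed

end

theorem mainTheorem3:
  fixes C :: "'c set" and tb :: "'c list" and N :: "'v set"
    and V :: "'v \<Rightarrow> 'c list" and A :: "'v \<Rightarrow> 'c list set"
  assumes "finite C" and "C \<noteq> {}"
    and "is_vote C tb"
    and "finite N"
    and "\<forall>i \<in> N. is_vote C (V i)"
    and "gs_game 3 tb N V A"
    and "minimality_assumption 3 tb N V A"
  shows "\<exists>s. pure_nash 3 tb N V A s"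
proof -
  have tb: "distinct tb" "set tb = C" using assms(3) unfolding is_vote_def by auto
  interpret approval3_profile tb N V
    using tb assms(2,4,5) by unfold_locales auto
  define P where "P = {p \<in> players 3 tb N V. \<exists>b\<in>A p. gs_manipulation 3 tb N V p b}"
  have "\<forall>p\<in>P. \<exists>b. b \<in> A p \<and> gs_manipulation 3 tb N V p b" unfolding P_def by blast
  from bchoice[OF this] obtain a where a: "\<forall>p\<in>P. a p \<in> A p \<and> gs_manipulation 3 tb N V p (a p)"
    by blast
  have "P \<subseteq> N" unfolding P_def players_def by blast
  moreover have "\<forall>p\<in>P. minimal_manipulation 3 tb N V p (a p)"
  proof
    fix p assume p: "p \<in> P"
    then have "p \<in> players 3 tb N V" unfolding P_def by blast
    with a p assms(7) show "minimal_manipulation 3 tb N V p (a p)"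
      unfolding minimality_assumption_def by blast
  qed
  ultimately interpret manipulation_profile tb N V P a
    by unfold_locales
  obtain D where "D \<subseteq> P" "stable D" using exists_stable by blast
  then show ?thesis using pure_nash_if_stable[OF assms(6,7) P_def] a by auto
qed

end
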